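(* Let $n\ge2$, let $-1=x_1<\cdots<x_n=1$ be real numbers, and let $U_X=\{-1,1\}\times\{x_1,\ldots,x_n\}$. 1. For any labels $y_1,\ldots,y_n\in\mathbb{R}$, there exists $\mu\in\mathcal{M}(\mathbb{U},\mathbb{R})$ supported in $U_X$ with $f_\mu(x_i)=y_i$ for all $i\in[n]$ (i.e., feasible for the regression problem $\inf\int_{\mathbb{U}}|d\mu(u)|$ subject to $f_\mu(x_i)=y_i$ for all $i$). 2. For any $k\ge1$ and labels $y_1,\ldots,y_n\in[k]$, there exists $\nu\in\mathcal{M}(\mathbb{U},\mathbb{R}^k)$ supported in $U_X$ with $(e_{y_i}-e_l)^Tf_\nu(x_i)\ge\mathbb{1}(y_i\neq l)$ for all $i\in[n]$ and $l\in[k]$ (i.e., feasible for the classification problem $\inf\int_{\mathbb{U}}\|d\mu(u)\|$ subject to these constraints).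
   Context: $[n]=\{1,\ldots,n\}$; $e_j$ is the $j$-th canonical basis vector of $\mathbb{R}^k$; $\mathbb{1}(y_i\neq l)$ is $1$ if $y_i\neq l$ and $0$ otherwise. Let $\mathbb{U}=\{-1,1\}\times[-1,1]$. For $u=(s,c)\in\mathbb{U}$ and $x\in\mathbb{R}$ let $\phi_u(x)=(s(x-c))_+$, where $(t)_+=\max(t,0)$. $\mathcal{M}(\mathbb{U},\mathbb{R}^k)$ is the set of (finite) signed Radon measures on $\mathbb{U}$ with values in $\mathbb{R}^k$, and $f_\mu(x)=\int_{\mathbb{U}}\phi_u(x)\,d\mu(u)$. *)

theory Defs
  imports "HOL-Analysis.Analysis"
begin

definition UU :: "(real \<times> real) set" where
  "UU = {-1, 1} \<times> {-1..1}"

definition phi :: "real \<times> real \<Rightarrow> real \<Rightarrow> real" where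
  "phi u x = max (fst u * (x - snd u)) 0"

definition fin_meas_on_U :: "(real \<times> real) measure \<Rightarrow> bool" where
  "fin_meas_on_U M \<longleftrightarrow> sets M = sets borel \<and> finite_measure M \<and> emeasure M (UNIV - UU) = 0"

text \<open>A finite real-valued signed Radon measure on UU, given by its Jordan decomposition
  (positive part, negative part).\<close>
type_synonym smeasure = "(real \<times> real) measure \<times> (real \<times> real) measure"

definition signed_meas :: "smeasure \<Rightarrow> bool" where
  "signed_meas \<mu> \<longleftrightarrow> fin_meas_on_U (fst \<mu>) \<and> fin_meas_on_U (snd \<mu>)"

definition supported_in :: "smeasure \<Rightarrow> (real \<times> real) set \<Rightarrow> bool" where
  "supported_in \<mu> S \<longleftrightarrow> emeasure (fst \<mu>) (UNIV - S) = 0 \<and> emeasure (snd \<mu>) (UNIV - S) = 0"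

definition f_meas :: "smeasure \<Rightarrow> real \<Rightarrow> real" where
  "f_meas \<mu> x = (\<integral>u. phi u x \<partial>(fst \<mu>)) - (\<integral>u. phi u x \<partial>(snd \<mu>))"

end

(* The piecewise linear interpolant of the data with kinks at the nodes is a constant plus a
   combination of the ReLUs (t - x_j)_+ = phi_(1,x_j); on [-1,1] the constant a equals
   a/2 (phi_(1,-1) + phi_(-1,1)). Splitting the coefficients into positive and negative parts
   gives two finite sums of point masses on U_X, i.e. a feasible signed measure. For
   classification, regress each class j onto its one-hot labels 1(y_i = j). *)
theory Submission
  imports Defs
begin

definition point_masses :: "'i set \<Rightarrow> ('i \<Rightarrow> real) \<Rightarrow> ('i \<Rightarrow> 'a::topological_space) \<Rightarrow> 'a measure"
  where "point_masses I w g = distr (point_measure I (\<lambda>i. ennreal (w i))) borel g"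

lemma sets_point_masses [simp]: "sets (point_masses I w g) = sets borel"
  by (simp add: point_masses_def)

lemma finite_measure_point_masses:
  assumes "finite I"
  shows "finite_measure (point_masses I w g)"
proof -
  have "finite_measure (point_measure I (\<lambda>i. ennreal (w i)))"
    by (rule finite_measureI) (simp add: space_point_measure emeasure_point_measure_finite assms)
  then show ?thesis
    unfolding point_masses_def by (rule finite_measure.finite_measure_distr) simp
qed

lemma emeasure_point_masses_eq_0:
  assumes "g ` I \<inter> A = {}"
  shows "emeasure (point_masses I w g) A = 0"
proof (cases "A \<in> sets borel")
  case True
  then have "emeasure (point_masses I w g) A = emeasure (point_measure I (\<lambda>i. ennreal (w i))) (g -` A \<inter> I)"
    unfolding point_masses_def by (subst emeasure_distr) (auto simp: space_point_measure)
  also have "g -` A \<inter> I = {}"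
    using assms by auto
  finally show ?thesis by simp
next
  case False
  then show ?thesis by (simp add: emeasure_notin_sets)
qed

lemma integral_point_masses:
  fixes h :: "'a::topological_space \<Rightarrow> real"
  assumes "finite I" "\<And>i. i \<in> I \<Longrightarrow> w i \<ge> 0" "h \<in> borel_measurable borel"
  shows "(\<integral>u. h u \<partial>point_masses I w g) = (\<Sum>i\<in>I. w i * h (g i))"
proof -
  have "(\<integral>u. h u \<partial>point_masses I w g) = (\<integral>i. h (g i) \<partial>point_measure I (\<lambda>i. ennreal (w i)))"
    unfolding point_masses_def by (rule integral_distr) (auto simp: assms(3))
  also have "\<dots> = (\<Sum>i\<in>I. w i * h (g i))"
    using assms by (subst lebesgue_integral_point_measure_finite) auto
  finally show ?thesis .
qed

lemma borel_measurable_phi [measurable]: "(\<lambda>u. phi u t) \<in> borel_measurable borel"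
  unfolding phi_def by (intro borel_measurable_continuous_onI continuous_intros)

lemma signed_meas_finite_combination:
  assumes "finite I" "g ` I \<subseteq> S" "S \<subseteq> UU"
  shows "\<exists>\<mu>. signed_meas \<mu> \<and> supported_in \<mu> S \<and> f_meas \<mu> = (\<lambda>t. \<Sum>i\<in>I. c i * phi (g i) t)"
proof (intro exI conjI)
  let ?\<mu> = "(point_masses I (\<lambda>i. max (c i) 0) g, point_masses I (\<lambda>i. max (- c i) 0) g)"
  have "g ` I \<inter> (UNIV - UU) = {}" "g ` I \<inter> (UNIV - S) = {}"
    using assms by auto
  then show "signed_meas ?\<mu>" "supported_in ?\<mu> S"
    unfolding signed_meas_def fin_meas_on_U_def supported_in_def
    by (simp_all add: emeasure_point_masses_eq_0 finite_measure_point_masses assms(1))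
  have "f_meas ?\<mu> t = (\<Sum>i\<in>I. max (c i) 0 * phi (g i) t) - (\<Sum>i\<in>I. max (- c i) 0 * phi (g i) t)" for t
    unfolding f_meas_def using assms(1) by (simp add: integral_point_masses)
  also have "\<dots> t = (\<Sum>i\<in>I. c i * phi (g i) t)" for t
    by (subst sum_subtractf[symmetric]) (rule sum.cong, auto simp: max_def algebra_simps)
  finally show "f_meas ?\<mu> = (\<lambda>t. \<Sum>i\<in>I. c i * phi (g i) t)" ..
qed

lemma strict_increasing_on_interval_le:
  fixes x :: "nat \<Rightarrow> 'a::order"
  assumes "\<forall>i\<in>{1..<n}. x i < x (Suc i)" "1 \<le> i" "i \<le> j" "j \<le> n"
  shows "x i \<le> x j"
  using assms(3,4)
proof (induction j rule: dec_induct)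
  case (step j)
  then have "x i \<le> x j" "x j < x (Suc j)"
    using assms(1,2) by auto
  then show ?case by simp
qed simp

lemma relu_interpolation:
  fixes x y :: "nat \<Rightarrow> real"
  shows "m \<ge> 1 \<Longrightarrow> \<forall>i\<in>{1..<m}. x i < x (Suc i) \<Longrightarrow>
    \<exists>a c. \<forall>i\<in>{1..m}. a + (\<Sum>j\<in>{1..<m}. c j * max (x i - x j) 0) = y i"
proof (induction m rule: nat_induct_at_least)
  case base
  show ?case by (rule exI[of _ "y 1"]) simp
next
  case (Suc m)
  then obtain a c where ac: "\<forall>i\<in>{1..m}. a + (\<Sum>j\<in>{1..<m}. c j * max (x i - x j) 0) = y i"
    by auto
  define v where "v = a + (\<Sum>j\<in>{1..<m}. c j * max (x (Suc m) - x j) 0)"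
  define c' where "c' = c(m := (y (Suc m) - v) / (x (Suc m) - x m))"
  have gap: "x m < x (Suc m)"
    using Suc by auto
  have sum_c': "(\<Sum>j\<in>{1..<Suc m}. c' j * max (x i - x j) 0) =
      (\<Sum>j\<in>{1..<m}. c j * max (x i - x j) 0) + c' m * max (x i - x m) 0" for i
    using Suc.hyps by (simp add: c'_def)
  show ?case
  proof (intro exI ballI)
    fix i assume i: "i \<in> {1..Suc m}"
    show "a + (\<Sum>j\<in>{1..<Suc m}. c' j * max (x i - x j) 0) = y i"
    proof (cases "i = Suc m")
      case True
      then show ?thesis
        using gap unfolding sum_c' by (simp add: c'_def v_def field_simps)
    next
      case False
      with i have "i \<in> {1..m}" by auto
      moreover from this have "x i \<le> x m"
        using strict_increasing_on_interval_le[of m x i m] Suc.prems by auto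
      ultimately show ?thesis
        unfolding sum_c' using ac by simp
    qed
  qed
qed

lemma regression_feasible:
  fixes n :: nat and x y :: "nat \<Rightarrow> real"
  assumes "n \<ge> 1" "x 1 = -1" "x n = 1" "\<forall>i\<in>{1..<n}. x i < x (Suc i)"
  shows "\<exists>\<mu>. signed_meas \<mu> \<and> supported_in \<mu> ({-1, 1} \<times> x ` {1..n})
    \<and> (\<forall>i\<in>{1..n}. f_meas \<mu> (x i) = y i)"
proof -
  let ?S = "{-1, 1} \<times> x ` {1..n}"
  have x_range: "x i \<in> {-1..1}" if "i \<in> {1..n}" for i
    using strict_increasing_on_interval_le[OF assms(4), of 1 i]
      strict_increasing_on_interval_le[OF assms(4), of i n] that assms(2,3) by auto
  then have "?S \<subseteq> UU"
    unfolding UU_def by auto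
  obtain a c where ac: "\<forall>i\<in>{1..n}. a + (\<Sum>j\<in>{1..<n}. c j * max (x i - x j) 0) = y i"
    using relu_interpolation assms(1,4) by blast
  txt \<open>Indices 0 and n carry the atoms (-1,1) and (1,-1) of the constant term, kept apart
    from the ReLU atom (1, x 1) of index 1.\<close>
  define g where "g j = (if j = 0 then (-1, x n) else if j = n then (1, x 1) else (1::real, x j))" for j
  define w where "w j = (if j = 0 \<or> j = n then a / 2 else c j)" for j
  have "g ` {0..n} \<subseteq> ?S"
    unfolding g_def using assms(1) by auto
  then obtain \<mu> where \<mu>: "signed_meas \<mu>" "supported_in \<mu> ?S"
    "f_meas \<mu> = (\<lambda>t. \<Sum>j\<in>{0..n}. w j * phi (g j) t)"
    using signed_meas_finite_combination[OF _ _ \<open>?S \<subseteq> UU\<close>] by blast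
  have "f_meas \<mu> (x i) = y i" if i: "i \<in> {1..n}" for i
  proof -
    have "{0..n} = insert 0 (insert n {1..<n})"
      using assms(1) by auto
    then have "f_meas \<mu> (x i) = w 0 * phi (g 0) (x i) + w n * phi (g n) (x i)
        + (\<Sum>j\<in>{1..<n}. w j * phi (g j) (x i))"
      using assms(1) by (simp add: \<mu>(3))
    also have "w 0 * phi (g 0) (x i) + w n * phi (g n) (x i) = a"
    proof -
      have "phi (g 0) (x i) = 1 - x i" "phi (g n) (x i) = x i + 1"
        using x_range[OF i] assms(1,2,3) by (auto simp: g_def phi_def)
      moreover have "w 0 = a / 2" "w n = a / 2"
        by (simp_all add: w_def)
      ultimately show ?thesis
        by (simp only:) (simp add: field_simps)
    qed
    also have "(\<Sum>j\<in>{1..<n}. w j * phi (g j) (x i)) = (\<Sum>j\<in>{1..<n}. c j * max (x i - x j) 0)"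
      by (rule sum.cong) (auto simp: w_def g_def phi_def)
    finally show ?thesis
      using ac i by simp
  qed
  with \<mu> show ?thesis by blast
qed

lemma classification_from_regression:
  fixes x :: "nat \<Rightarrow> real" and y :: "nat \<Rightarrow> nat"
  assumes "\<And>z :: nat \<Rightarrow> real. \<exists>\<mu>. P \<mu> \<and> (\<forall>i\<in>I. f_meas \<mu> (x i) = z i)"
  shows "\<exists>\<nu>. (\<forall>j. P (\<nu> j)) \<and>
    (\<forall>i\<in>I. \<forall>l. f_meas (\<nu> (y i)) (x i) - f_meas (\<nu> l) (x i) \<ge> (if y i \<noteq> l then 1 else 0))"
proof -
  obtain \<nu> where \<nu>: "\<And>j. P (\<nu> j) \<and> (\<forall>i\<in>I. f_meas (\<nu> j) (x i) = (if y i = j then 1 else 0))"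
    using assms[of "\<lambda>i. if y i = _ then 1 else 0"] by metis
  then show ?thesis by (intro exI[of _ \<nu>]) auto
qed

theorem lemma3:
  fixes n :: nat and x :: "nat \<Rightarrow> real"
  assumes "n \<ge> 2"
    and "x 1 = -1" and "x n = 1"
    and "\<forall>i\<in>{1..<n}. x i < x (Suc i)"
  shows "(\<forall>y :: nat \<Rightarrow> real. \<exists>\<mu>. signed_meas \<mu> \<and> supported_in \<mu> ({-1, 1} \<times> x ` {1..n})
            \<and> (\<forall>i\<in>{1..n}. f_meas \<mu> (x i) = y i))
    \<and> (\<forall>(k::nat) (y :: nat \<Rightarrow> nat). k \<ge> 1 \<longrightarrow> (\<forall>i\<in>{1..n}. y i \<in> {1..k}) \<longrightarrow>
         (\<exists>\<nu> :: nat \<Rightarrow> smeasure.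
            (\<forall>j\<in>{1..k}. signed_meas (\<nu> j) \<and> supported_in (\<nu> j) ({-1, 1} \<times> x ` {1..n}))
          \<and> (\<forall>i\<in>{1..n}. \<forall>l\<in>{1..k}.
               f_meas (\<nu> (y i)) (x i) - f_meas (\<nu> l) (x i) \<ge> (if y i \<noteq> l then 1 else 0))))"
proof -
  have regression: "\<exists>\<mu>. signed_meas \<mu> \<and> supported_in \<mu> ({-1, 1} \<times> x ` {1..n})
      \<and> (\<forall>i\<in>{1..n}. f_meas \<mu> (x i) = y i)" for y
    using assms by (intro regression_feasible) auto
  have "\<exists>\<nu> :: nat \<Rightarrow> smeasure.
      (\<forall>j. signed_meas (\<nu> j) \<and> supported_in (\<nu> j) ({-1, 1} \<times> x ` {1..n}))
    \<and> (\<forall>i\<in>{1..n}. \<forall>l. f_meas (\<nu> (y i)) (x i) - f_meas (\<nu> l) (x i) \<ge> (if y i \<noteq> l then 1 else 0))"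
    for y :: "nat \<Rightarrow> nat"
    by (rule classification_from_regression) (use regression in blast)
  with regression show ?thesis by blast
qed

end
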